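(* For every mixed graph $G$ without directed cycles, $\mathrm{cw}_{\mathrm m}(G)\le\mathrm{nd}_{\mathrm m}(G)+1$. Further, $\mathrm{cw}_{\mathrm m}$ does not bound $\mathrm{nd}_{\mathrm m}$.
   Context: A mixed graph $G$ consists of a finite vertex set $V(G)$, a set $E(G)$ of undirected edges and a set $A(G)$ of directed arcs; it is simple and contains no directed cycle. $N^+(v)$, $N^-(v)$, $N^{\mathrm u}(v)$ denote out-, in- and undirected neighbors. Vertices $u,v$ have the same mixed type if $N^{\mathrm u}(u)\setminus\{v\}=N^{\mathrm u}(v)\setminus\{u\}$, $N^-(u)=N^-(v)$, $N^+(u)=N^+(v)$; $\mathrm{nd}_{\mathrm m}(G)$ is the number of mixed types. The mixed cliquewidth $\mathrm{cw}_{\mathrm m}(G)$ is the minimum number of labels needed to construct $G$ using: create a new vertex with label $i$; disjoint union; $\eta_{i,j}$ ($i\ne j$): add an edge between every vertex labeled $i$ and every vertex labeled $j$; $\alpha_{i,j}$ ($i\ne j$): add an arc from every vertex labeled $i$ to every vertex labeled $j$; $\rho_{i\to j}$: rename label $i$ to $j$. A parameter $\alpha$ bounds $\beta$ if there is a computable $f$ with $\beta(G)\le f(\alpha(G))$ for all $G$ (here: all mixed graphs without directed cycles). *)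

theory Defs
  imports Main
begin

text \<open>A mixed graph is a triple (V, E, A): vertex set V, undirected edges E given as a
symmetric relation (both (u,v) and (v,u) are present for an edge uv), and arcs A
((u,v) is an arc from u to v).\<close>

type_synonym 'a mgraph = "'a set \<times> ('a \<times> 'a) set \<times> ('a \<times> 'a) set"

definition mverts :: "'a mgraph \<Rightarrow> 'a set" where "mverts G = fst G"
definition medges :: "'a mgraph \<Rightarrow> ('a \<times> 'a) set" where "medges G = fst (snd G)"
definition marcs :: "'a mgraph \<Rightarrow> ('a \<times> 'a) set" where "marcs G = snd (snd G)"

definition mixed_graph :: "'a mgraph \<Rightarrow> bool" where
  "mixed_graph G \<longleftrightarrow>
     finite (mverts G) \<and>
     medges G \<subseteq> mverts G \<times> mverts G \<and> sym (medges G) \<and> irrefl (medges G) \<and>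
     marcs G \<subseteq> mverts G \<times> mverts G \<and> irrefl (marcs G) \<and>
     (\<forall>u v. (u, v) \<in> medges G \<longrightarrow> (u, v) \<notin> marcs G) \<and>
     (\<forall>u v. (u, v) \<in> marcs G \<longrightarrow> (v, u) \<notin> marcs G) \<and>
     acyclic (marcs G)"

definition Nout :: "'a mgraph \<Rightarrow> 'a \<Rightarrow> 'a set" where
  "Nout G v = {u. (v, u) \<in> marcs G}"
definition Nin :: "'a mgraph \<Rightarrow> 'a \<Rightarrow> 'a set" where
  "Nin G v = {u. (u, v) \<in> marcs G}"
definition Nund :: "'a mgraph \<Rightarrow> 'a \<Rightarrow> 'a set" where
  "Nund G v = {u. (v, u) \<in> medges G}"

definition same_mixed_type :: "'a mgraph \<Rightarrow> 'a \<Rightarrow> 'a \<Rightarrow> bool" where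
  "same_mixed_type G u v \<longleftrightarrow>
     Nund G u - {v} = Nund G v - {u} \<and> Nin G u = Nin G v \<and> Nout G u = Nout G v"

definition nd_m :: "'a mgraph \<Rightarrow> nat" where
  "nd_m G = card (mverts G // {(u, v). u \<in> mverts G \<and> v \<in> mverts G \<and> same_mixed_type G u v})"

inductive cw_constr :: "nat \<Rightarrow> 'a mgraph \<Rightarrow> ('a \<Rightarrow> nat) \<Rightarrow> bool" for k :: nat where
  create: "i < k \<Longrightarrow> cw_constr k ({v}, {}, {}) (\<lambda>_. i)"
| union: "cw_constr k (V1, E1, A1) l1 \<Longrightarrow> cw_constr k (V2, E2, A2) l2 \<Longrightarrow> V1 \<inter> V2 = {} \<Longrightarrow>
    cw_constr k (V1 \<union> V2, E1 \<union> E2, A1 \<union> A2) (\<lambda>x. if x \<in> V1 then l1 x else l2 x)"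
| eta: "cw_constr k (V, E, A) l \<Longrightarrow> i \<noteq> j \<Longrightarrow>
    cw_constr k (V, E \<union> {(x, y). x \<in> V \<and> y \<in> V \<and>
        ((l x = i \<and> l y = j) \<or> (l x = j \<and> l y = i))}, A) l"
| alpha: "cw_constr k (V, E, A) l \<Longrightarrow> i \<noteq> j \<Longrightarrow>
    cw_constr k (V, E, A \<union> {(x, y). x \<in> V \<and> y \<in> V \<and> l x = i \<and> l y = j}) l"
| rho: "cw_constr k (V, E, A) l \<Longrightarrow> j < k \<Longrightarrow>
    cw_constr k (V, E, A) (\<lambda>x. if l x = i then j else l x)"

definition cw_m :: "'a mgraph \<Rightarrow> nat" where
  "cw_m G = (LEAST k. \<exists>l. cw_constr k G l)"

end

theory Submission
  imports Defs
begin

text \<open>Label every vertex by the index of its mixed type, and keep one spare label. Vertices can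
then be added one at a time: a new vertex v enters with the spare label, and because vertices of
equal type have identical neighbourhoods outside themselves, the edges and arcs between v and the
vertices built so far are unions of whole label classes, so one \<open>\<eta>\<close> or \<open>\<alpha>\<close> per class
creates them; finally v is renamed to its own type. Conversely, transitive tournaments have
mixed cliquewidth at most 2 but all of their vertices have different types, since the in-neighbourhood
of i is {..<i}.\<close>

lemma cw_constr_eta_pairs:
  assumes "cw_constr k (V, E, A) l" "finite P" "\<forall>(i, j)\<in>P. i \<noteq> j"
  shows "cw_constr k (V, E \<union> {(x, y). x \<in> V \<and> y \<in> V \<and> ((l x, l y) \<in> P \<or> (l y, l x) \<in> P)}, A) l"
  using assms(2,3)
proof (induction P rule: finite_induct)
  case empty
  then show ?case
    using assms(1) by simp
next
  case (insert p P)
  obtain i j where p: "p = (i, j)" and "i \<noteq> j"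
    using insert.prems by (cases p) auto
  with insert have "cw_constr k (V, E \<union> {(x, y). x \<in> V \<and> y \<in> V \<and> ((l x, l y) \<in> P \<or> (l y, l x) \<in> P)}
      \<union> {(x, y). x \<in> V \<and> y \<in> V \<and> ((l x = i \<and> l y = j) \<or> (l x = j \<and> l y = i))}, A) l"
    by (intro cw_constr.eta) auto
  then show ?case
    by (rule back_subst[where P = "\<lambda>E. cw_constr k (V, E, A) l"]) (auto simp: p)
qed

lemma cw_constr_alpha_pairs:
  assumes "cw_constr k (V, E, A) l" "finite P" "\<forall>(i, j)\<in>P. i \<noteq> j"
  shows "cw_constr k (V, E, A \<union> {(x, y). x \<in> V \<and> y \<in> V \<and> (l x, l y) \<in> P}) l"
  using assms(2,3)
proof (induction P rule: finite_induct)
  case empty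
  then show ?case
    using assms(1) by simp
next
  case (insert p P)
  obtain i j where p: "p = (i, j)" and "i \<noteq> j"
    using insert.prems by (cases p) auto
  with insert have "cw_constr k (V, E, A \<union> {(x, y). x \<in> V \<and> y \<in> V \<and> (l x, l y) \<in> P}
      \<union> {(x, y). x \<in> V \<and> y \<in> V \<and> l x = i \<and> l y = j}) l"
    by (intro cw_constr.alpha) auto
  then show ?case
    by (rule back_subst[where P = "\<lambda>A. cw_constr k (V, E, A) l"]) (auto simp: p)
qed

lemma cw_constr_add_vertex:
  assumes constr: "cw_constr (Suc t) (S, E, A) l" and labels: "\<forall>x\<in>S. l x < t"
    and "v \<notin> S" and "c < Suc t"
  shows "\<exists>l'. cw_constr (Suc t) (insert v S,
             E \<union> {v} \<times> {y \<in> S. l y \<in> N} \<union> {y \<in> S. l y \<in> N} \<times> {v},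
             A \<union> {v} \<times> {y \<in> S. l y \<in> Out} \<union> {y \<in> S. l y \<in> In} \<times> {v}) l'
           \<and> (\<forall>x\<in>S. l' x = l x) \<and> l' v = c"
proof -
  define L where "L x = (if x \<in> S then l x else t)" for x
  define P where "P = Pair t ` (N \<inter> {..<t})"
  define Q where "Q = Pair t ` (Out \<inter> {..<t}) \<union> (\<lambda>i. (i, t)) ` (In \<inter> {..<t})"
  have "cw_constr (Suc t) (S \<union> {v}, E \<union> {}, A \<union> {}) L"
    unfolding L_def using constr cw_constr.create[of t "Suc t" v] \<open>v \<notin> S\<close> by (intro cw_constr.union) auto
  then have "cw_constr (Suc t) (insert v S, E, A) L"
    by simp
  then have "cw_constr (Suc t) (insert v S,
      E \<union> {(x, y). x \<in> insert v S \<and> y \<in> insert v S \<and> ((L x, L y) \<in> P \<or> (L y, L x) \<in> P)}, A) L"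
    by (rule cw_constr_eta_pairs) (auto simp: P_def)
  then have "cw_constr (Suc t) (insert v S,
      E \<union> {(x, y). x \<in> insert v S \<and> y \<in> insert v S \<and> ((L x, L y) \<in> P \<or> (L y, L x) \<in> P)},
      A \<union> {(x, y). x \<in> insert v S \<and> y \<in> insert v S \<and> (L x, L y) \<in> Q}) L"
    by (rule cw_constr_alpha_pairs) (auto simp: Q_def)
  then have "cw_constr (Suc t) (insert v S,
      E \<union> {(x, y). x \<in> insert v S \<and> y \<in> insert v S \<and> ((L x, L y) \<in> P \<or> (L y, L x) \<in> P)},
      A \<union> {(x, y). x \<in> insert v S \<and> y \<in> insert v S \<and> (L x, L y) \<in> Q}) (\<lambda>x. if L x = t then c else L x)"
    using \<open>c < Suc t\<close> by (rule cw_constr.rho)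
  moreover have "{(x, y). x \<in> insert v S \<and> y \<in> insert v S \<and> ((L x, L y) \<in> P \<or> (L y, L x) \<in> P)}
      = {v} \<times> {y \<in> S. l y \<in> N} \<union> {y \<in> S. l y \<in> N} \<times> {v}"
    using labels \<open>v \<notin> S\<close> by (auto simp: L_def P_def)
  moreover have "{(x, y). x \<in> insert v S \<and> y \<in> insert v S \<and> (L x, L y) \<in> Q}
      = {v} \<times> {y \<in> S. l y \<in> Out} \<union> {y \<in> S. l y \<in> In} \<times> {v}"
    using labels \<open>v \<notin> S\<close> by (auto simp: L_def Q_def)
  moreover have "\<forall>x\<in>S. (if L x = t then c else L x) = l x"
    using labels by (auto simp: L_def)
  moreover have "(if L v = t then c else L v) = c"
    using \<open>v \<notin> S\<close> by (simp add: L_def)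
  ultimately show ?thesis
    by (auto simp: Un_assoc)
qed

definition induced_mgraph :: "'a mgraph \<Rightarrow> 'a set \<Rightarrow> 'a mgraph" where
  "induced_mgraph G S = (S, medges G \<inter> S \<times> S, marcs G \<inter> S \<times> S)"

definition type_labelling :: "'a mgraph \<Rightarrow> nat \<Rightarrow> ('a \<Rightarrow> nat) \<Rightarrow> bool" where
  "type_labelling G t c \<longleftrightarrow> (\<forall>x\<in>mverts G. c x < t) \<and>
     (\<forall>x\<in>mverts G. \<forall>y\<in>mverts G. c x = c y \<longrightarrow> same_mixed_type G x y)"

lemma same_mixed_type_medges:
  assumes "same_mixed_type G u y" "sym (medges G)" "(v, u) \<in> medges G" "v \<noteq> y"
  shows "(v, y) \<in> medges G"
proof (cases "u = y")
  case False
  have "v \<in> Nund G u - {y}"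
    using assms(2-4) by (auto simp: Nund_def dest: symD)
  then have "v \<in> Nund G y"
    using assms(1) by (auto simp: same_mixed_type_def)
  then show ?thesis
    using assms(2) by (auto simp: Nund_def dest: symD)
qed (use assms in simp)

lemma same_mixed_type_marcs_to:
  "same_mixed_type G u y \<Longrightarrow> (v, u) \<in> marcs G \<Longrightarrow> (v, y) \<in> marcs G"
  by (auto simp: same_mixed_type_def Nin_def)

lemma same_mixed_type_marcs_from:
  "same_mixed_type G u y \<Longrightarrow> (u, v) \<in> marcs G \<Longrightarrow> (y, v) \<in> marcs G"
  by (auto simp: same_mixed_type_def Nout_def)

lemma type_labelling_neighbour_classes:
  assumes G: "mixed_graph G" and c: "type_labelling G t c"
    and "S \<subseteq> mverts G" "v \<notin> S"
  shows "{y \<in> S. c y \<in> c ` Nund G v} = Nund G v \<inter> S"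
    and "{y \<in> S. c y \<in> c ` Nout G v} = Nout G v \<inter> S"
    and "{y \<in> S. c y \<in> c ` Nin G v} = Nin G v \<inter> S"
proof -
  have same: "same_mixed_type G u y" if "u \<in> mverts G" "y \<in> S" "c u = c y" for u y
    using c that \<open>S \<subseteq> mverts G\<close> by (auto simp: type_labelling_def)
  have sym: "sym (medges G)"
    using G by (simp add: mixed_graph_def)
  have V: "(v, u) \<in> medges G \<Longrightarrow> u \<in> mverts G" "(v, u) \<in> marcs G \<Longrightarrow> u \<in> mverts G"
    "(u, v) \<in> marcs G \<Longrightarrow> u \<in> mverts G" for u
    using G by (auto simp: mixed_graph_def)
  show "{y \<in> S. c y \<in> c ` Nund G v} = Nund G v \<inter> S"
    using same_mixed_type_medges[OF same sym] V(1) \<open>v \<notin> S\<close> by (force simp: Nund_def)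
  show "{y \<in> S. c y \<in> c ` Nout G v} = Nout G v \<inter> S"
    using same_mixed_type_marcs_to[OF same] V(2) by (force simp: Nout_def)
  show "{y \<in> S. c y \<in> c ` Nin G v} = Nin G v \<inter> S"
    using same_mixed_type_marcs_from[OF same] V(3) by (force simp: Nin_def)
qed

lemma induced_mgraph_insert:
  assumes "mixed_graph G" "v \<notin> S"
  shows "induced_mgraph G (insert v S) = (insert v S,
      medges G \<inter> S \<times> S \<union> {v} \<times> (Nund G v \<inter> S) \<union> (Nund G v \<inter> S) \<times> {v},
      marcs G \<inter> S \<times> S \<union> {v} \<times> (Nout G v \<inter> S) \<union> (Nin G v \<inter> S) \<times> {v})"
  using assms by (auto simp: induced_mgraph_def mixed_graph_def Nund_def Nout_def Nin_def irrefl_def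
      dest: symD)

lemma cw_constr_induced_type_labelling:
  assumes G: "mixed_graph G" and c: "type_labelling G t c"
    and "finite S" "S \<noteq> {}" "S \<subseteq> mverts G"
  shows "\<exists>l. cw_constr (Suc t) (induced_mgraph G S) l \<and> (\<forall>x\<in>S. l x = c x)"
  using assms(3-5)
proof (induction S rule: finite_ne_induct)
  case (singleton v)
  have "cw_constr (Suc t) ({v}, {}, {}) (\<lambda>_. c v)"
    using c singleton by (intro cw_constr.create) (auto simp: type_labelling_def)
  moreover have "induced_mgraph G {v} = ({v}, {}, {})"
    using G by (auto simp: induced_mgraph_def mixed_graph_def irrefl_def)
  ultimately show ?case
    by auto
next
  case (insert v S)
  then obtain l where l: "cw_constr (Suc t) (induced_mgraph G S) l" "\<forall>x\<in>S. l x = c x"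
    by auto
  have bounds: "\<forall>x\<in>S. l x < t" "c v < Suc t"
    using c l(2) insert.prems by (auto simp: type_labelling_def)
  have "{y \<in> S. l y \<in> X} = {y \<in> S. c y \<in> X}" for X
    using l(2) by auto
  with type_labelling_neighbour_classes[OF G c _ \<open>v \<notin> S\<close>] insert.prems
    cw_constr_add_vertex[OF l(1)[unfolded induced_mgraph_def] bounds(1) \<open>v \<notin> S\<close> bounds(2),
      of "c ` Nund G v" "c ` Nout G v" "c ` Nin G v"]
  obtain l' where "cw_constr (Suc t) (induced_mgraph G (insert v S)) l'"
    and "\<forall>x\<in>S. l' x = l x" "l' v = c v"
    by (auto simp: induced_mgraph_insert[OF G \<open>v \<notin> S\<close>])
  with l(2) show ?case
    by auto
qed

lemma ex_class_index:
  assumes "finite V" "refl_on V R" "R \<subseteq> V \<times> V"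
  obtains c where "\<forall>x\<in>V. c x < card (V // R)" "\<forall>x\<in>V. \<forall>y\<in>V. c x = c y \<longrightarrow> (x, y) \<in> R"
proof -
  obtain h where h: "bij_betw h (V // R) {0..<card (V // R)}"
    using ex_bij_betw_finite_nat finite_quotient[OF assms(1,3)] by blast
  have "\<forall>x\<in>V. h (R `` {x}) < card (V // R)"
    using bij_betw_apply[OF h] by (auto intro: quotientI)
  moreover have "(x, y) \<in> R" if "x \<in> V" "y \<in> V" "h (R `` {x}) = h (R `` {y})" for x y
  proof -
    have "R `` {x} = R `` {y}"
      using bij_betw_imp_inj_on[OF h] that by (auto intro: quotientI dest: inj_onD)
    moreover have "y \<in> R `` {y}"
      using assms(2) \<open>y \<in> V\<close> by (auto dest: refl_onD)
    ultimately show "(x, y) \<in> R"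
      by blast
  qed
  ultimately show thesis
    by (intro that[of "\<lambda>x. h (R `` {x})"]) auto
qed

lemma ex_type_labelling:
  assumes "mixed_graph G"
  shows "\<exists>c. type_labelling G (nd_m G) c"
proof -
  let ?R = "{(u, v). u \<in> mverts G \<and> v \<in> mverts G \<and> same_mixed_type G u v}"
  have "finite (mverts G)"
    using assms by (simp add: mixed_graph_def)
  moreover have "refl_on (mverts G) ?R"
    by (auto intro: refl_onI simp: same_mixed_type_def)
  ultimately obtain c where "\<forall>x\<in>mverts G. c x < nd_m G"
      "\<forall>x\<in>mverts G. \<forall>y\<in>mverts G. c x = c y \<longrightarrow> (x, y) \<in> ?R"
    unfolding nd_m_def by (rule ex_class_index) auto
  then show ?thesis
    unfolding type_labelling_def by auto
qed

lemma cw_m_le: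
  "cw_constr k G l \<Longrightarrow> cw_m G \<le> k"
  unfolding cw_m_def by (auto intro: Least_le)

theorem cw_m_le_Suc_nd_m:
  assumes G: "mixed_graph G" and "mverts G \<noteq> {}"
  shows "cw_m G \<le> Suc (nd_m G)"
proof -
  obtain c where "type_labelling G (nd_m G) c"
    using ex_type_labelling[OF G] by blast
  moreover have "finite (mverts G)"
    using G by (simp add: mixed_graph_def)
  ultimately obtain l where "cw_constr (Suc (nd_m G)) (induced_mgraph G (mverts G)) l"
    using cw_constr_induced_type_labelling[OF G] \<open>mverts G \<noteq> {}\<close> by blast
  moreover have "induced_mgraph G (mverts G) = G"
    using G by (cases G) (auto simp: induced_mgraph_def mixed_graph_def mverts_def medges_def marcs_def)
  ultimately show ?thesis
    by (auto intro: cw_m_le)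
qed

definition transitive_tournament :: "nat \<Rightarrow> nat mgraph" where
  "transitive_tournament n = ({..<n}, {}, {(i, j). i < j \<and> j < n})"

lemma mixed_graph_transitive_tournament:
  "mixed_graph (transitive_tournament n)"
proof -
  have "acyclic {(i, j). i < j \<and> j < n}"
    by (rule acyclic_subset[OF wf_acyclic[OF wf_less_than]]) auto
  then show ?thesis
    by (auto simp: mixed_graph_def transitive_tournament_def mverts_def medges_def marcs_def
        irrefl_def sym_def)
qed

lemma cw_constr_transitive_tournament:
  "\<exists>l. cw_constr 2 (transitive_tournament (Suc n)) l \<and> (\<forall>x<Suc n. l x = 0)"
proof (induction n)
  case 0
  have "cw_constr 2 ({0}, {}, {}) (\<lambda>_. 0)"
    by (rule cw_constr.create) simp
  moreover have "transitive_tournament (Suc 0) = ({0}, {}, {})"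
    by (auto simp: transitive_tournament_def)
  ultimately show ?case
    by auto
next
  case (Suc n)
  then obtain l where "cw_constr 2 (transitive_tournament (Suc n)) l" and l: "\<forall>x<Suc n. l x = 0"
    by blast
  then have constr: "cw_constr (Suc 1) ({..<Suc n}, {}, {(i, j). i < j \<and> j < Suc n}) l"
    by (simp add: transitive_tournament_def numeral_2_eq_2)
  have all_zero: "{y \<in> {..<Suc n}. l y \<in> {0}} = {..<Suc n}"
    using l by auto
  from cw_constr_add_vertex[OF constr, of "Suc n" 0 "{}" "{}" "{0}", unfolded all_zero] l
  obtain l' where "cw_constr 2 (insert (Suc n) {..<Suc n}, {},
      {(i, j). i < j \<and> j < Suc n} \<union> {..<Suc n} \<times> {Suc n}) l'"
    and l'_labels: "\<forall>x\<in>{..<Suc n}. l' x = l x" "l' (Suc n) = 0"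
    by (auto simp: numeral_2_eq_2)
  moreover have "{(i, j). i < j \<and> j < Suc n} \<union> {..<Suc n} \<times> {Suc n} = {(i, j). i < j \<and> j < Suc (Suc n)}"
    by (auto simp: less_Suc_eq)
  moreover have "insert (Suc n) {..<Suc n} = {..<Suc (Suc n)}"
    by (simp add: lessThan_Suc)
  ultimately have "cw_constr 2 (transitive_tournament (Suc (Suc n))) l'"
    by (simp add: transitive_tournament_def)
  moreover have "\<forall>x<Suc (Suc n). l' x = 0"
    using l l'_labels by (auto simp: less_Suc_eq)
  ultimately show ?case
    by blast
qed

lemma cw_m_transitive_tournament:
  "cw_m (transitive_tournament (Suc n)) \<le> 2"
  using cw_constr_transitive_tournament cw_m_le by blast

lemma card_quotient_Id_on:
  "card (A // Id_on A) = card A"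
proof -
  have "A // Id_on A = (\<lambda>x. {x}) ` A"
    by (auto simp: quotient_def)
  then show ?thesis
    by (simp add: card_image)
qed

lemma nd_m_transitive_tournament:
  "nd_m (transitive_tournament n) = n"
proof -
  let ?T = "transitive_tournament n"
  have verts: "mverts ?T = {..<n}"
    by (simp add: mverts_def transitive_tournament_def)
  have "Nin ?T i = {..<i}" if "i < n" for i
    using that by (auto simp: Nin_def marcs_def transitive_tournament_def)
  then have "a = b" if "a < n" "b < n" "same_mixed_type ?T a b" for a b
    using that by (auto simp: same_mixed_type_def)
  then have "{(u, v). u \<in> mverts ?T \<and> v \<in> mverts ?T \<and> same_mixed_type ?T u v} = Id_on {..<n}"
    unfolding verts by (auto simp: same_mixed_type_def)
  then show ?thesis
    by (simp add: nd_m_def card_quotient_Id_on verts)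
qed

lemma cw_m_does_not_bound_nd_m:
  fixes f :: "nat \<Rightarrow> nat"
  shows "\<exists>G :: nat mgraph. mixed_graph G \<and> mverts G \<noteq> {} \<and> f (cw_m G) < nd_m G"
proof (intro exI conjI)
  define n where "n = (\<Sum>i\<le>2. f i)"
  let ?T = "transitive_tournament (Suc n)"
  show "mixed_graph ?T"
    by (rule mixed_graph_transitive_tournament)
  show "mverts ?T \<noteq> {}"
    by (auto simp: mverts_def transitive_tournament_def)
  have "f (cw_m ?T) \<le> n"
    unfolding n_def using cw_m_transitive_tournament by (intro member_le_sum) auto
  then show "f (cw_m ?T) < nd_m ?T"
    by (simp add: nd_m_transitive_tournament)
qed

theorem mainTheorem17:
  shows "(\<forall>G :: 'a mgraph. mixed_graph G \<and> mverts G \<noteq> {} \<longrightarrow> cw_m G \<le> nd_m G + 1) \<and>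
         \<not> (\<exists>f :: nat \<Rightarrow> nat. \<forall>G :: nat mgraph. mixed_graph G \<and> mverts G \<noteq> {} \<longrightarrow>
               nd_m G \<le> f (cw_m G))"
proof (intro conjI notI)
  show "\<forall>G :: 'a mgraph. mixed_graph G \<and> mverts G \<noteq> {} \<longrightarrow> cw_m G \<le> nd_m G + 1"
    using cw_m_le_Suc_nd_m by auto
next
  assume "\<exists>f :: nat \<Rightarrow> nat. \<forall>G :: nat mgraph. mixed_graph G \<and> mverts G \<noteq> {} \<longrightarrow>
    nd_m G \<le> f (cw_m G)"
  then obtain f :: "nat \<Rightarrow> nat"
    where f: "\<forall>G :: nat mgraph. mixed_graph G \<and> mverts G \<noteq> {} \<longrightarrow> nd_m G \<le> f (cw_m G)"
    by blast
  obtain G :: "nat mgraph" where "mixed_graph G" "mverts G \<noteq> {}" "f (cw_m G) < nd_m G"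
    using cw_m_does_not_bound_nd_m by blast
  with f show False
    by (meson not_le)
qed

end
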